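(* Let $(G,\{1\},N\setminus\{1\})$ be a Stackelberg game with the single leader $1$. Then $\mathbf{X}^{SCE}=\mathbf{X}^{SCE\text{-}PA}=\mathbf{X}^{SCE\text{-}PAPE}$, and for every $\mathbf{x}=[x_\pi]\in\mathbf{X}^{SCE}$, the distribution $x_\varnothing$ maximizes $u_1$ over $\mathcal{X}^{CE}_{N\setminus\{1\}}$ (i.e. $x_\varnothing$ is an optimal correlated strategy to commit to).
   Context: A finite game is $G=(N,\{S_p\}_{p\in N},\{u_p\}_{p\in N})$ with players $N=\{1,\dots,n\}$, finite nonempty strategy sets $S_p$, and utilities $u_p:S\to\mathbb{R}$ on $S=\prod_{p\in N}S_p$; write $s=(s_p,s_{-p})$ with $s_{-p}\in S_{-p}=\prod_{q\neq p}S_q$. $\mathcal{X}=\Delta(S)$ is the set of probability distributions on $S$ and $u_p(x)=\sum_{s\in S}x(s)u_p(s)$ for $x\in\mathcal{X}$. For $P\subseteq N$, $\mathcal{X}^{CE}_P$ is the set of $x\in\mathcal{X}$ such that for every $p\in P$ and all $s_p\neq s_p'\in S_p$: $\sum_{s_{-p}\in S_{-p}} x(s_p,s_{-p})\,(u_p(s_p,s_{-p})-u_p(s_p',s_{-p}))\ge 0$; $\mathcal{X}^{CE}=\mathcal{X}^{CE}_N$ is the set of correlated equilibria of $G$. A Stackelberg game (SG) is a triple $(G,L,F)$ with $L\cup F=N$ and $L\cap F=\emptyset$ (leaders and followers). For $P\subseteq N$, $\Pi_P$ is the set of ordered subsets of $P$ (finite sequences of pairwise distinct elements of $P$, including the empty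 sequence $\varnothing$); for $\pi\in\Pi_P$ and $p\in P$ not occurring in $\pi$, $\pi p$ is $\pi$ with $p$ appended; when used as a set, $\pi$ means its set of entries. $\mathbf{X}=\prod_{\pi\in\Pi_L}\mathcal{X}^{CE}_{\pi\cup F}$, with elements $\mathbf{x}=[x_\pi]_{\pi\in\Pi_L}$. For $\mathbf{x}\in\mathbf{X}$ and $\pi\in\Pi_L$, $x_\pi$ is stable if $u_p(x_\pi)\ge u_p(x_{\pi p})$ for all $p\in L\setminus\pi$; $\mathbf{x}$ is stable if $x_\varnothing$ is stable, and perfectly stable if $x_\pi$ is stable for every $\pi\in\Pi_L$; $\mathbf{X}^{S}$ and $\mathbf{X}^{PS}$ denote the sets of stable and perfectly stable elements of $\mathbf{X}$. For $\mathbf{X}'\subseteq\mathbf{X}$ and $\pi\in\Pi_L$, $\mathcal{P}_{L\setminus\pi}(\mathbf{X}')$ is the set of Pareto optimal elements of $\{x'_\pi:\mathbf{x}'\in\mathbf{X}'\}$ with respect to the objectives $u_p$, $p\in L\setminus\pi$ (an element $y$ of the set is Pareto optimal if no $y'$ in the set satisfies $u_p(y')\ge u_p(y)$ for all $p\in L\setminus\pi$ with strict inequality for some such $p$). $\mathbf{x}\in\mathbf{X}$ is an SCE if $\mathbf{x}\in\mathbf{X}^S$ and $x_\varnothing\in\mathcal{P}_L(\mathbf{X}^S)$; an SCE-PA if $\mathbf{x}\in\mathbf{X}^{PS}$ and $x_\varnothing\in\mathcal{P}_L(\mathbf{X}^{PS})$; an SCE-PAPE if $\mathbf{x}\in\mathbf{X}^{PS}$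 and $x_\pi\in\mathcal{P}_{L\setminus\pi}(\mathbf{X}^{PS})$ for every $\pi\in\Pi_L$. The corresponding sets are $\mathbf{X}^{SCE}$, $\mathbf{X}^{SCE\text{-}PA}$, $\mathbf{X}^{SCE\text{-}PAPE}$. *)

theory Defs
  imports Complex_Main "HOL-Library.FuncSet"
begin

text \<open>Players are natural numbers in a finite set N (in the theorem N = {1..n});
  Sset p is the strategy set of player p; a pure profile is an element of the
  extensional product PiE N Sset; u p s is the utility of player p at profile s.\<close>

definition profiles :: "nat set \<Rightarrow> (nat \<Rightarrow> 's set) \<Rightarrow> (nat \<Rightarrow> 's) set" where
  "profiles N Sset = PiE N Sset"

definition Dist :: "nat set \<Rightarrow> (nat \<Rightarrow> 's set) \<Rightarrow> ((nat \<Rightarrow> 's) \<Rightarrow> real) set" where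
  "Dist N Sset = {x. (\<forall>s. 0 \<le> x s) \<and> (\<forall>s. s \<notin> profiles N Sset \<longrightarrow> x s = 0)
                     \<and> sum x (profiles N Sset) = 1}"

definition EU :: "nat set \<Rightarrow> (nat \<Rightarrow> 's set) \<Rightarrow> (nat \<Rightarrow> (nat \<Rightarrow> 's) \<Rightarrow> real)
                  \<Rightarrow> nat \<Rightarrow> ((nat \<Rightarrow> 's) \<Rightarrow> real) \<Rightarrow> real" where
  "EU N Sset u p x = (\<Sum>s\<in>profiles N Sset. x s * u p s)"

text \<open>X^CE_P: the sum over s_{-p} is written as the sum over profiles s with s p = a.\<close>
definition CE_P :: "nat set \<Rightarrow> (nat \<Rightarrow> 's set) \<Rightarrow> (nat \<Rightarrow> (nat \<Rightarrow> 's) \<Rightarrow> real)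
                    \<Rightarrow> nat set \<Rightarrow> ((nat \<Rightarrow> 's) \<Rightarrow> real) set" where
  "CE_P N Sset u P = {x \<in> Dist N Sset. \<forall>p\<in>P. \<forall>a\<in>Sset p. \<forall>b\<in>Sset p. a \<noteq> b \<longrightarrow>
      0 \<le> (\<Sum>s\<in>{s \<in> profiles N Sset. s p = a}. x s * (u p s - u p (s(p := b))))}"

definition ordered_subsets :: "nat set \<Rightarrow> nat list set" where
  "ordered_subsets P = {\<pi>. distinct \<pi> \<and> set \<pi> \<subseteq> P}"

definition BX :: "nat set \<Rightarrow> (nat \<Rightarrow> 's set) \<Rightarrow> (nat \<Rightarrow> (nat \<Rightarrow> 's) \<Rightarrow> real)
                  \<Rightarrow> nat set \<Rightarrow> nat set \<Rightarrow> (nat list \<Rightarrow> (nat \<Rightarrow> 's) \<Rightarrow> real) set" where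
  "BX N Sset u L F = {x. \<forall>\<pi>\<in>ordered_subsets L. x \<pi> \<in> CE_P N Sset u (set \<pi> \<union> F)}"

definition stable_at :: "nat set \<Rightarrow> (nat \<Rightarrow> 's set) \<Rightarrow> (nat \<Rightarrow> (nat \<Rightarrow> 's) \<Rightarrow> real)
                  \<Rightarrow> nat set \<Rightarrow> (nat list \<Rightarrow> (nat \<Rightarrow> 's) \<Rightarrow> real) \<Rightarrow> nat list \<Rightarrow> bool" where
  "stable_at N Sset u L x \<pi> =
     (\<forall>p\<in>L - set \<pi>. EU N Sset u p (x (\<pi> @ [p])) \<le> EU N Sset u p (x \<pi>))"

definition XS :: "nat set \<Rightarrow> (nat \<Rightarrow> 's set) \<Rightarrow> (nat \<Rightarrow> (nat \<Rightarrow> 's) \<Rightarrow> real)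
                  \<Rightarrow> nat set \<Rightarrow> nat set \<Rightarrow> (nat list \<Rightarrow> (nat \<Rightarrow> 's) \<Rightarrow> real) set" where
  "XS N Sset u L F = {x \<in> BX N Sset u L F. stable_at N Sset u L x []}"

definition XPS :: "nat set \<Rightarrow> (nat \<Rightarrow> 's set) \<Rightarrow> (nat \<Rightarrow> (nat \<Rightarrow> 's) \<Rightarrow> real)
                  \<Rightarrow> nat set \<Rightarrow> nat set \<Rightarrow> (nat list \<Rightarrow> (nat \<Rightarrow> 's) \<Rightarrow> real) set" where
  "XPS N Sset u L F = {x \<in> BX N Sset u L F.
      \<forall>\<pi>\<in>ordered_subsets L. stable_at N Sset u L x \<pi>}"

definition pareto :: "nat set \<Rightarrow> (nat \<Rightarrow> 's set) \<Rightarrow> (nat \<Rightarrow> (nat \<Rightarrow> 's) \<Rightarrow> real)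
                  \<Rightarrow> nat set \<Rightarrow> (nat list \<Rightarrow> (nat \<Rightarrow> 's) \<Rightarrow> real) set \<Rightarrow> nat list
                  \<Rightarrow> ((nat \<Rightarrow> 's) \<Rightarrow> real) set" where
  "pareto N Sset u Q X' \<pi> =
     {y \<in> (\<lambda>x. x \<pi>) ` X'. \<not> (\<exists>y'\<in>(\<lambda>x. x \<pi>) ` X'.
        (\<forall>p\<in>Q. EU N Sset u p y \<le> EU N Sset u p y') \<and>
        (\<exists>p\<in>Q. EU N Sset u p y < EU N Sset u p y'))}"

definition SCE :: "nat set \<Rightarrow> (nat \<Rightarrow> 's set) \<Rightarrow> (nat \<Rightarrow> (nat \<Rightarrow> 's) \<Rightarrow> real)
                  \<Rightarrow> nat set \<Rightarrow> nat set \<Rightarrow> (nat list \<Rightarrow> (nat \<Rightarrow> 's) \<Rightarrow> real) set" where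
  "SCE N Sset u L F = {x \<in> XS N Sset u L F. x [] \<in> pareto N Sset u L (XS N Sset u L F) []}"

definition SCE_PA :: "nat set \<Rightarrow> (nat \<Rightarrow> 's set) \<Rightarrow> (nat \<Rightarrow> (nat \<Rightarrow> 's) \<Rightarrow> real)
                  \<Rightarrow> nat set \<Rightarrow> nat set \<Rightarrow> (nat list \<Rightarrow> (nat \<Rightarrow> 's) \<Rightarrow> real) set" where
  "SCE_PA N Sset u L F = {x \<in> XPS N Sset u L F. x [] \<in> pareto N Sset u L (XPS N Sset u L F) []}"

definition SCE_PAPE :: "nat set \<Rightarrow> (nat \<Rightarrow> 's set) \<Rightarrow> (nat \<Rightarrow> (nat \<Rightarrow> 's) \<Rightarrow> real)
                  \<Rightarrow> nat set \<Rightarrow> nat set \<Rightarrow> (nat list \<Rightarrow> (nat \<Rightarrow> 's) \<Rightarrow> real) set" where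
  "SCE_PAPE N Sset u L F = {x \<in> XPS N Sset u L F.
      \<forall>\<pi>\<in>ordered_subsets L. x \<pi> \<in> pareto N Sset u (L - set \<pi>) (XPS N Sset u L F) \<pi>}"

end

theory Submission
  imports Defs
begin

text \<open>With a single leader l the only ordered subsets are [] and [l]. Perfect stability then
  reduces to stability, and at [l] there is no objective left, so every candidate is Pareto
  optimal there: the three solution concepts coincide. Pareto optimality of x [] with the
  single objective u l is plain maximality, and any y in X^CE_F with a larger leader payoff
  could replace x [] without breaking stability, since u l (x [l]) \<le> u l (x []) < u l y.\<close>

lemma ordered_subsets_singleton: "ordered_subsets {l} = {[], [l]}"
proof -
  have "xs = [] \<or> xs = [l]" if "distinct xs" "set xs \<subseteq> {l}" for xs
  proof (cases xs)
    case (Cons a t)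
    with that have "a = l" "set t \<subseteq> {l}" "l \<notin> set t" by auto
    then show ?thesis using Cons by (cases t) auto
  qed simp
  then show ?thesis unfolding ordered_subsets_def by auto
qed

lemma XPS_single_leader: "XPS N S u {l} F = XS N S u {l} F"
  unfolding XPS_def XS_def ordered_subsets_singleton stable_at_def by auto

lemma XS_single_leader_iff:
  "x \<in> XS N S u {l} F \<longleftrightarrow>
     x [] \<in> CE_P N S u F \<and> x [l] \<in> CE_P N S u (insert l F)
     \<and> EU N S u l (x [l]) \<le> EU N S u l (x [])"
  unfolding XS_def BX_def stable_at_def ordered_subsets_singleton by auto

lemma pareto_no_objectives: "x \<in> X' \<Longrightarrow> x \<pi> \<in> pareto N S u {} X' \<pi>"
  unfolding pareto_def by auto

lemma pareto_single_objective:
  "y \<in> pareto N S u {p} X' \<pi> \<longleftrightarrow>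
     y \<in> (\<lambda>x. x \<pi>) ` X' \<and> (\<forall>x\<in>X'. EU N S u p (x \<pi>) \<le> EU N S u p y)"
  unfolding pareto_def by (auto simp: not_le)

lemma SCE_eq_SCE_PA_single_leader: "SCE N S u {l} F = SCE_PA N S u {l} F"
  unfolding SCE_def SCE_PA_def XPS_single_leader ..

lemma SCE_PA_eq_SCE_PAPE_single_leader: "SCE_PA N S u {l} F = SCE_PAPE N S u {l} F"
  unfolding SCE_PA_def SCE_PAPE_def ordered_subsets_singleton
  using pareto_no_objectives by auto

lemma SCE_single_leader_commitment_optimal:
  assumes x: "x \<in> SCE N S u {l} F"
  shows "x [] \<in> CE_P N S u F \<and> (\<forall>y\<in>CE_P N S u F. EU N S u l y \<le> EU N S u l (x []))"
proof -
  from x have xs: "x \<in> XS N S u {l} F"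
    and max: "\<forall>x'\<in>XS N S u {l} F. EU N S u l (x' []) \<le> EU N S u l (x [])"
    unfolding SCE_def pareto_single_objective by auto
  have "EU N S u l y \<le> EU N S u l (x [])" if y: "y \<in> CE_P N S u F" for y
  proof (rule ccontr)
    assume "\<not> ?thesis"
    with xs y have "x([] := y) \<in> XS N S u {l} F"
      unfolding XS_single_leader_iff by auto
    with max \<open>\<not> ?thesis\<close> show False by force
  qed
  with xs show ?thesis unfolding XS_single_leader_iff by blast
qed

theorem theorem2:
  fixes n :: nat and Sset :: "nat \<Rightarrow> 's set" and u :: "nat \<Rightarrow> (nat \<Rightarrow> 's) \<Rightarrow> real"
  assumes "1 \<le> n"
    and "\<forall>p\<in>{1..n}. finite (Sset p) \<and> Sset p \<noteq> {}"
  shows "SCE {1..n} Sset u {1} ({1..n} - {1}) = SCE_PA {1..n} Sset u {1} ({1..n} - {1})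
       \<and> SCE_PA {1..n} Sset u {1} ({1..n} - {1}) = SCE_PAPE {1..n} Sset u {1} ({1..n} - {1})
       \<and> (\<forall>x\<in>SCE {1..n} Sset u {1} ({1..n} - {1}).
            x [] \<in> CE_P {1..n} Sset u ({1..n} - {1})
          \<and> (\<forall>y\<in>CE_P {1..n} Sset u ({1..n} - {1}).
               EU {1..n} Sset u 1 y \<le> EU {1..n} Sset u 1 (x [])))"
  using SCE_eq_SCE_PA_single_leader SCE_PA_eq_SCE_PAPE_single_leader
    SCE_single_leader_commitment_optimal by blast

end
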